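(* Let $\Gamma=(x_j,a_j)_{j=1}^k$ be a sequence of moves that is legal starting from $\eta$ and ends at $\eta'=\Gamma_k(\eta)$. For any set $X$ of susceptible sites, let $\Gamma^X$ be the sequence obtained from $\Gamma$ by ignoring every move that would cure (make healthy) a site in $X$. Then $\Gamma^X$ is also a legal sequence of moves starting from $\eta$, ending at $\eta''=\Gamma^X_k(\eta)$, and for all $j\le k$ the configurations $\Gamma_j(\eta)$ and $\Gamma^X_j(\eta)$ differ only on the set $X$.
   Context: Polluted FA2f setting on $\mathbb{Z}^d$: $\mathcal{S}\subseteq\mathbb{Z}^d$ is the set of susceptible sites, configurations are $\eta\in\{i,h\}^{\mathcal{S}}$ ($i$ infected, $h$ healthy). For $x\in\mathcal{S}$, $c_x(\eta)=1$ if $x$ has at least 2 nearest neighbours in $\mathcal{S}$ that are infected in $\eta$, else $0$. A move is a pair $(x,a)$ with $x\in\mathcal{S}$, $a\in\{i,h\}$; applying it to $\eta$ sets the state at $x$ to $a$; it is legal in $\eta$ if $c_x(\eta)=1$. For a sequence of moves $\Gamma=(x_j,a_j)_{j=1}^k$, $\Gamma_j(\eta)$ is the configuration obtained from $\eta$ by applying the first $j$ moves; $\Gamma$ is legal from $\eta$ if for each $j$ the move $(x_{j+1},a_{j+1})$ is legal in $\Gamma_j(\eta)$. *)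

theory Defs
  imports Main
begin

text \<open>Sites of Z^d are functions from a finite index type 'd to int.\<close>
type_synonym 'd site = "'d \<Rightarrow> int"

datatype state = Infected | Healthy

type_synonym 'd config = "'d site \<Rightarrow> state"
type_synonym 'd move = "'d site \<times> state"

definition nbr :: "('d::finite) site \<Rightarrow> 'd site \<Rightarrow> bool" where
  "nbr x y \<longleftrightarrow> (\<Sum>i\<in>UNIV. \<bar>x i - y i\<bar>) = 1"

definition constraint :: "('d::finite) site set \<Rightarrow> 'd config \<Rightarrow> 'd site \<Rightarrow> bool" where
  "constraint S \<eta> x \<longleftrightarrow> card {y \<in> S. nbr x y \<and> \<eta> y = Infected} \<ge> 2"

definition apply_move :: "'d move \<Rightarrow> 'd config \<Rightarrow> 'd config" where
  "apply_move m \<eta> = \<eta>(fst m := snd m)"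

text \<open>Gamma_j(eta) = apply_moves (take j Gamma) eta.\<close>
fun apply_moves :: "'d move list \<Rightarrow> 'd config \<Rightarrow> 'd config" where
  "apply_moves [] \<eta> = \<eta>"
| "apply_moves (m # ms) \<eta> = apply_moves ms (apply_move m \<eta>)"

definition legal_move :: "('d::finite) site set \<Rightarrow> 'd config \<Rightarrow> 'd move \<Rightarrow> bool" where
  "legal_move S \<eta> m \<longleftrightarrow> fst m \<in> S \<and> constraint S \<eta> (fst m)"

fun legal_seq :: "('d::finite) site set \<Rightarrow> 'd config \<Rightarrow> 'd move list \<Rightarrow> bool" where
  "legal_seq S \<eta> [] = True"
| "legal_seq S \<eta> (m # ms) = (legal_move S \<eta> m \<and> legal_seq S (apply_move m \<eta>) ms)"

definition cures_in :: "'d site set \<Rightarrow> 'd move \<Rightarrow> bool" where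
  "cures_in X m \<longleftrightarrow> fst m \<in> X \<and> snd m = Healthy"

text \<open>Gamma^X: ignore the curing moves in X. Its j-th configuration is obtained by
  applying the non-ignored moves among the first j moves of Gamma.\<close>
definition restrict_seq :: "'d site set \<Rightarrow> 'd move list \<Rightarrow> 'd move list" where
  "restrict_seq X \<Gamma> = filter (\<lambda>m. \<not> cures_in X m) \<Gamma>"

end

theory Submission
  imports Defs "HOL-Library.FuncSet"
begin

text \<open>Ignoring the curing moves in X can only leave more sites infected, and only inside X.
  So, for any move sequence, each configuration of the restricted sequence agrees with the
  corresponding original one outside X and has all of its infections; legality then transfers
  because the FA2f constraint is monotone in the set of infected sites.\<close>

definition dominates_within :: "'d site set \<Rightarrow> 'd config \<Rightarrow> 'd config \<Rightarrow> bool" where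
  "dominates_within X \<eta> \<eta>' \<longleftrightarrow>
     (\<forall>y. y \<notin> X \<longrightarrow> \<eta>' y = \<eta> y) \<and> (\<forall>y. \<eta> y = Infected \<longrightarrow> \<eta>' y = Infected)"

lemma finite_nbr: "finite {y. nbr (x::('d::finite) site) y}"
proof -
  have "y \<in> PiE UNIV (\<lambda>i. {x i - 1 .. x i + 1})" if "nbr x y" for y
  proof -
    have "\<bar>x i - y i\<bar> \<le> 1" for i
    proof -
      have "\<bar>x i - y i\<bar> \<le> (\<Sum>i\<in>UNIV. \<bar>x i - y i\<bar>)"
        by (rule member_le_sum) auto
      with that show ?thesis by (simp add: nbr_def)
    qed
    then have "y i \<in> {x i - 1 .. x i + 1}" for i
      by (simp add: abs_le_iff) (metis add.commute diff_le_eq le_diff_eq)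
    then show ?thesis by (simp add: PiE_iff)
  qed
  then have "{y. nbr x y} \<subseteq> PiE UNIV (\<lambda>i. {x i - 1 .. x i + 1})"
    by blast
  then show ?thesis
    by (rule finite_subset) (simp add: finite_PiE)
qed

lemma constraint_mono:
  assumes "constraint S \<eta> x" and "\<And>y. \<eta> y = Infected \<Longrightarrow> \<eta>' y = Infected"
  shows "constraint S \<eta>' x"
proof -
  have "card {y \<in> S. nbr x y \<and> \<eta> y = Infected} \<le> card {y \<in> S. nbr x y \<and> \<eta>' y = Infected}"
    by (rule card_mono) (use finite_nbr[of x] assms(2) in \<open>auto intro: finite_subset\<close>)
  with assms(1) show ?thesis by (simp add: constraint_def)
qed

lemma legal_move_mono:
  assumes "legal_move S \<eta> m" and "dominates_within X \<eta> \<eta>'"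
  shows "legal_move S \<eta>' m"
  using assms constraint_mono by (auto simp: legal_move_def dominates_within_def)

lemma dominates_within_refl: "dominates_within X \<eta> \<eta>"
  by (simp add: dominates_within_def)

lemma dominates_within_apply_move:
  assumes "dominates_within X \<eta> \<eta>'"
  shows "dominates_within X (apply_move m \<eta>) (if cures_in X m then \<eta>' else apply_move m \<eta>')"
  using assms by (auto simp: dominates_within_def apply_move_def cures_in_def)

lemma dominates_within_apply_moves:
  assumes "dominates_within X \<eta> \<eta>'"
  shows "dominates_within X (apply_moves \<Gamma> \<eta>) (apply_moves (restrict_seq X \<Gamma>) \<eta>')"
  using assms
proof (induction \<Gamma> arbitrary: \<eta> \<eta>')
  case Nil
  then show ?case by (simp add: restrict_seq_def)
next
  case (Cons m ms)
  from Cons.IH[OF dominates_within_apply_move[OF Cons.prems, of m]] show ?case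
    by (cases "cures_in X m") (simp_all add: restrict_seq_def)
qed

lemma legal_seq_restrict_seq:
  assumes "legal_seq S \<eta> \<Gamma>" and "dominates_within X \<eta> \<eta>'"
  shows "legal_seq S \<eta>' (restrict_seq X \<Gamma>)"
  using assms
proof (induction \<Gamma> arbitrary: \<eta> \<eta>')
  case Nil
  then show ?case by (simp add: restrict_seq_def)
next
  case (Cons m ms)
  from Cons.prems(1) have legal_m: "legal_move S \<eta> m"
    and legal_ms: "legal_seq S (apply_move m \<eta>) ms" by simp_all
  note dom = dominates_within_apply_move[OF Cons.prems(2), of m]
  show ?case
  proof (cases "cures_in X m")
    case True
    with dom have "legal_seq S \<eta>' (restrict_seq X ms)"
      using Cons.IH[OF legal_ms] by simp
    with True show ?thesis by (simp add: restrict_seq_def)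
  next
    case False
    with dom have "legal_seq S (apply_move m \<eta>') (restrict_seq X ms)"
      using Cons.IH[OF legal_ms] by simp
    moreover have "legal_move S \<eta>' m"
      by (rule legal_move_mono[OF legal_m Cons.prems(2)])
    ultimately show ?thesis using False by (simp add: restrict_seq_def)
  qed
qed

theorem lemma3:
  fixes S X :: "('d::finite) site set" and \<eta> :: "'d config" and \<Gamma> :: "'d move list"
  assumes "X \<subseteq> S"
    and "legal_seq S \<eta> \<Gamma>"
  shows "legal_seq S \<eta> (restrict_seq X \<Gamma>)
    \<and> (\<forall>j \<le> length \<Gamma>. \<forall>y \<in> S - X.
          apply_moves (take j \<Gamma>) \<eta> y = apply_moves (restrict_seq X (take j \<Gamma>)) \<eta> y)"
proof
  show "legal_seq S \<eta> (restrict_seq X \<Gamma>)"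
    using legal_seq_restrict_seq[OF assms(2) dominates_within_refl] .
  show "\<forall>j \<le> length \<Gamma>. \<forall>y \<in> S - X.
          apply_moves (take j \<Gamma>) \<eta> y = apply_moves (restrict_seq X (take j \<Gamma>)) \<eta> y"
    using dominates_within_apply_moves[OF dominates_within_refl, of X "take _ \<Gamma>" \<eta>]
    by (auto simp: dominates_within_def)
qed

end
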